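(* Let $p\in[0,1/2)$, let $0<\delta<\frac12$, and let $\beta(p,\delta)$ be the smallest positive integer $\beta$ such that $1-\bigl(1-\sum_{i=\lceil\beta/2\rceil}^{\beta}\binom{\beta}{i}p^i(1-p)^{\beta-i}\bigr)^3\le\delta$. Let $\tilde m$ be a positive integer and $s=\lceil\tilde m/(3\beta(p,\delta))\rceil$, and suppose $$\frac12-\frac{\log_2 n}{2s}>\delta .$$ Then for every target, the noisy searching tree algorithm with parameters $\beta=\beta(p,\delta)$ and $\tilde m$ outputs the correct index $l^*$ with probability at least $$1-\exp\Bigl(-s\,D_e\Bigl(\tfrac12-\tfrac{\log_2 n}{2s}\,\Big\|\,\delta\Bigr)\Bigr).$$
   Context: Noisy searching problem: given sorted reals $\tilde\theta_0=-\infty<\tilde\theta_1<\cdots<\tilde\theta_{n-1}<\tilde\theta_n=+\infty$ and a target $\tilde\theta\notin\{\tilde\theta_1,\ldots,\tilde\theta_{n-1}\}$, the goal is the index $l^*\in[n]$ with $\tilde\theta_{l^*-1}<\tilde\theta<\tilde\theta_{l^*}$. Querying $\tilde\theta_j$ ($j\in[n-1]$) returns $\mathbb{1}_{\{\tilde\theta_j<\tilde\theta\}}\oplus Z$, where the $Z$'s are i.i.d. $\mathrm{Bern}(p)$ across queries. Noisy searching tree algorithm with budget $\tilde m$ and integer $\beta$: build the binary tree $T$ whose root has label $(0,n)$ and in which every node $(i,j)$ with $j-i\ge2$ has left child $(i,\lceil\frac{i+j}2\rceil)$ and right child $(\lceil\frac{i+j}2\rceil,j)$; let $s=\lceil\tilde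 m/(3\beta)\rceil$, and form $T^*$ by attaching to each leaf of $T$ a chain of $s$ nodes with the same label. Starting at the root, perform $s$ steps; at current node $(i,j)$: if $i\ne0$, query $\tilde\theta_i$ $\beta$ times and declare failure if fewer than $\lceil\beta/2\rceil$ responses equal 1; if $j\ne n$, query $\tilde\theta_j$ $\beta$ times and declare failure if at least $\lceil\beta/2\rceil$ responses equal 1. On failure move to the parent. Otherwise, if $j-i\ge2$, query $\tilde\theta_{\lceil(i+j)/2\rceil}$ $\beta$ times and move to the left child if fewer than $\lceil\beta/2\rceil$ responses equal 1, else to the right child; if $j-i=1$, move to the next node of the chain. Output $\hat l=i+1$ for the final node $(i,j)$. $D_e(a\|b)=a\ln\frac ab+(1-a)\ln\frac{1-a}{1-b}$ is the relative entropy in natural units. *)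

theory Defs
  imports "HOL-Probability.Probability"
begin

definition D_e :: "real \<Rightarrow> real \<Rightarrow> real" where
  "D_e a b = a * ln (a / b) + (1 - a) * ln ((1 - a) / (1 - b))"

definition maj_err :: "real \<Rightarrow> nat \<Rightarrow> real" where
  "maj_err p \<beta> = (\<Sum>i = nat \<lceil>real \<beta> / 2\<rceil>..\<beta>. real (\<beta> choose i) * p ^ i * (1 - p) ^ (\<beta> - i))"

definition beta_pd :: "real \<Rightarrow> real \<Rightarrow> nat" where
  "beta_pd p \<delta> = (LEAST \<beta>. 0 < \<beta> \<and> 1 - (1 - maj_err p \<beta>) ^ 3 \<le> \<delta>)"

text \<open>Number of responses equal to 1 when querying index k beta times:
  each response is the truth bit XOR an independent Bern(p) noise, so the count
  is binomial with success probability 1-p (truth bit 1) or p (truth bit 0).\<close>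
definition ones_count :: "real \<Rightarrow> nat \<Rightarrow> (nat \<Rightarrow> bool) \<Rightarrow> nat \<Rightarrow> nat pmf" where
  "ones_count p \<beta> truth k = binomial_pmf \<beta> (if truth k then 1 - p else p)"

text \<open>The state is the pth of
  nodes of T* from the current node (head) back to the root (last element);
  chain nodes below a leaf carry the same label as the leaf. Moving to the parent
  pops the head (the root has no failure tests since i = 0 and j = n).\<close>
definition nst_step :: "real \<Rightarrow> nat \<Rightarrow> nat \<Rightarrow> (nat \<Rightarrow> bool) \<Rightarrow>
    (nat \<times> nat) list \<Rightarrow> (nat \<times> nat) list pmf" where
  "nst_step p \<beta> n truth pth =
    (let i = fst (hd pth); j = snd (hd pth);
         h = nat \<lceil>real \<beta> / 2\<rceil>;
         parent = (if length pth \<le> 1 then pth else tl pth)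
     in do {
       okL \<leftarrow> (if i \<noteq> 0 then map_pmf (\<lambda>c. h \<le> c) (ones_count p \<beta> truth i)
               else return_pmf True);
       if \<not> okL then return_pmf parent else do {
         okR \<leftarrow> (if j \<noteq> n then map_pmf (\<lambda>c. c < h) (ones_count p \<beta> truth j)
                 else return_pmf True);
         if \<not> okR then return_pmf parent
         else if 2 \<le> j - i then do {
           let mid = nat \<lceil>(real i + real j) / 2\<rceil>;
           c \<leftarrow> ones_count p \<beta> truth mid;
           return_pmf (if c < h then (i, mid) # pth else (mid, j) # pth)
         }
         else return_pmf ((i, j) # pth)
       }
     })"

definition nst_output :: "real \<Rightarrow> nat \<Rightarrow> nat \<Rightarrow> nat \<Rightarrow> (nat \<Rightarrow> bool) \<Rightarrow> nat pmf" where
  "nst_output p \<beta> n s truth =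
     map_pmf (\<lambda>pth. fst (hd pth) + 1)
       (((\<lambda>M. bind_pmf M (nst_step p \<beta> n truth)) ^^ s) (return_pmf [(0, n)]))"

end

theory Submission
  imports Defs
begin

text \<open>
  Record the run as the path of \<open>T*\<close> from the current node back to the root, and let its
  potential be the number of nodes on the path whose interval does not contain \<open>l*\<close> minus the
  number that do. A step never raises the potential by more than one, and lowers it with
  probability at least \<open>(1 - e)\<^sup>3 \<ge> 1 - \<delta>\<close>, where \<open>e\<close> is the error probability of a majority
  vote of \<open>\<beta>\<close> queries: at a node containing \<open>l*\<close> the two boundary tests and the comparison
  with the midpoint must all be right, at any other node one correct boundary test sends the
  search back up. The root has potential \<open>-1\<close>. If the potential ends below \<open>-K\<close>, where
  \<open>n \<le> 2\<^sup>K\<close>, then more than \<open>K\<close> nodes of the path contain \<open>l*\<close>; the deepest of them has width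
  one, so the path ends in the chain below the leaf \<open>(l* - 1, l*)\<close> and the output is correct.
  Bounding the expectation of \<open>z\<close> to the power of the potential step by step (a Chernoff bound)
  and optimising over \<open>z\<close> gives the relative-entropy exponent.
\<close>

section \<open>Paths in the search tree\<close>

definition covers :: "nat \<Rightarrow> nat \<times> nat \<Rightarrow> bool" where
  "covers l v \<longleftrightarrow> fst v < l \<and> l \<le> snd v"

text \<open>A node of width one is its own child: this models the chain of \<open>T*\<close> below a leaf.\<close>
definition tree_child :: "nat \<times> nat \<Rightarrow> nat \<times> nat \<Rightarrow> bool" where
  "tree_child w v \<longleftrightarrow>
     (if 2 \<le> snd w - fst w
      then v = (fst w, (fst w + snd w + 1) div 2) \<or> v = ((fst w + snd w + 1) div 2, snd w)
      else v = w)"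

fun tree_path :: "nat \<Rightarrow> (nat \<times> nat) list \<Rightarrow> bool" where
  "tree_path n [] \<longleftrightarrow> False"
| "tree_path n [v] \<longleftrightarrow> v = (0, n)"
| "tree_path n (v # w # r) \<longleftrightarrow> tree_child w v \<and> tree_path n (w # r)"

definition potential :: "nat \<Rightarrow> (nat \<times> nat) list \<Rightarrow> int" where
  "potential l xs =
     int (length (filter (\<lambda>v. \<not> covers l v) xs)) - int (length (filter (covers l) xs))"

lemma potential_Cons [simp]:
  "potential l (v # xs) = potential l xs + (if covers l v then -1 else 1)"
  by (simp add: potential_def)

lemma tree_child_bounds:
  assumes "tree_child w v" "fst w < snd w"
  shows "fst w \<le> fst v" "snd v \<le> snd w" "fst v < snd v" "2 * (snd v - fst v) \<le> snd w - fst w + 1"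
  using assms unfolding tree_child_def by (auto split: if_splits)

lemma tree_path_bounds:
  "tree_path n xs \<Longrightarrow> 1 \<le> n \<Longrightarrow> v \<in> set xs \<Longrightarrow> fst v < snd v \<and> snd v \<le> n"
proof (induction n xs arbitrary: v rule: tree_path.induct)
  case (3 n v w r)
  then show ?case using tree_child_bounds[of w v] by fastforce
qed auto

lemma tree_path_covers_tail:
  "tree_path n (v # xs) \<Longrightarrow> 1 \<le> n \<Longrightarrow> covers l v \<Longrightarrow> w \<in> set xs \<Longrightarrow> covers l w"
proof (induction n "v # xs" arbitrary: v xs rule: tree_path.induct)
  case (3 n v w' r)
  have "fst w' < snd w'" using tree_path_bounds[of n "w' # r"] 3 by auto
  then have "covers l w'" using tree_child_bounds[of w' v] 3 by (auto simp: covers_def)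
  then show ?case using 3 by auto
qed auto

lemma tree_path_width:
  "tree_path n xs \<Longrightarrow> 1 \<le> n \<Longrightarrow> (snd (hd xs) - fst (hd xs) - 1) * 2 ^ (length xs - 1) \<le> n - 1"
proof (induction n xs rule: tree_path.induct)
  case (3 n v w r)
  have "fst w < snd w" using tree_path_bounds[of n "w # r"] 3 by auto
  then have "2 * (snd v - fst v - 1) \<le> snd w - fst w - 1"
    using tree_child_bounds[of w v] "3.prems"(1) by auto
  then have "(snd v - fst v - 1) * 2 ^ length (w # r) \<le> (snd w - fst w - 1) * 2 ^ length r"
    by (simp add: mult.assoc[symmetric])
  also have "\<dots> \<le> n - 1" using 3 by simp
  finally show ?case by simp
qed auto

lemma tree_path_width_le_1:
  assumes "tree_path n xs" "1 \<le> n" "n \<le> 2 ^ K" "K < length xs"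
  shows "snd (hd xs) - fst (hd xs) \<le> 1"
proof -
  have "2 ^ K \<le> (2::nat) ^ (length xs - 1)" using assms(4) by (intro power_increasing) auto
  then have "(snd (hd xs) - fst (hd xs) - 1) * 2 ^ (length xs - 1) < 1 * 2 ^ (length xs - 1)"
    using tree_path_width[OF assms(1,2)] assms(2,3) by linarith
  then show ?thesis by (subst (asm) mult_less_cancel2) simp
qed

lemma tree_path_all_covers:
  assumes "tree_path n xs" "1 \<le> n" "n \<le> 2 ^ K" "K < length (filter (covers l) xs)"
  shows "\<forall>v\<in>set xs. covers l v"
  using assms
proof (induction xs)
  case (Cons v r)
  show ?case
  proof (cases "covers l v")
    case True
    then show ?thesis using tree_path_covers_tail[OF Cons.prems(1,2) True] by auto
  next
    case False
    then obtain w r' where r: "r = w # r'" using Cons.prems(4) by (cases r) auto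
    have path: "tree_path n r" using Cons.prems(1) r by simp
    have "K < length (filter (covers l) r)" using Cons.prems(4) False by simp
    then have all: "\<forall>v\<in>set r. covers l v" and "K < length r"
      using Cons.IH[OF path Cons.prems(2,3)] length_filter_le[of "covers l" r] by (blast, linarith)
    then have "snd w - fst w \<le> 1" using tree_path_width_le_1[OF path Cons.prems(2,3)] r by simp
    then have "v = w" using Cons.prems(1) r by (simp add: tree_child_def)
    then show ?thesis using all r False by simp
  qed
qed simp

lemma tree_path_output_eq:
  assumes "tree_path n xs" "1 \<le> n" "n \<le> 2 ^ K" "potential l xs \<le> - int K - 1"
  shows "fst (hd xs) + 1 = l"
proof -
  have "K < length (filter (covers l) xs)" using assms(4) unfolding potential_def by linarith
  then have all: "\<forall>v\<in>set xs. covers l v" and "K < length xs"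
    using tree_path_all_covers[OF assms(1-3)] length_filter_le[of "covers l" xs]
    by (blast, linarith)
  then have "snd (hd xs) - fst (hd xs) \<le> 1" using tree_path_width_le_1[OF assms(1-3)] by simp
  moreover have "covers l (hd xs)" using all assms(1) by (cases xs) auto
  ultimately show ?thesis unfolding covers_def by linarith
qed

lemma pmf_Not: "pmf M (\<not> x) = 1 - pmf M x"
  by (cases x) (simp_all add: pmf_False_conv_True)

lemma pmf_map_Not_True: "pmf (map_pmf Not M) True = pmf M False"
  using pmf_map_inj'[of Not M False] by (simp add: inj_def)

lemma measure_bind_pmf_bool:
  fixes A :: "bool pmf"
  shows "measure_pmf.prob (bind_pmf A f) S
    = pmf A True * measure_pmf.prob (f True) S + (1 - pmf A True) * measure_pmf.prob (f False) S"
proof -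
  have "ennreal (measure_pmf.prob (bind_pmf A f) S) = (\<integral>\<^sup>+b. emeasure (f b) S \<partial>A)"
    by (simp flip: measure_pmf.emeasure_eq_measure)
  also have "\<dots> = (\<Sum>b\<in>UNIV. emeasure (f b) S * pmf A b)"
    by (subst nn_integral_measure_pmf_support[of UNIV]) auto
  also have "\<dots> = ennreal (pmf A True * measure_pmf.prob (f True) S
                         + pmf A False * measure_pmf.prob (f False) S)"
    by (simp add: UNIV_bool measure_pmf.emeasure_eq_measure ennreal_mult'' ennreal_plus
        mult.commute)
  finally show ?thesis
    by (subst (asm) ennreal_inj) (auto simp: pmf_False_conv_True pmf_le_1)
qed

lemma pmf_le_measure_map_pmf: "g x \<in> S \<Longrightarrow> pmf M x \<le> measure_pmf.prob (map_pmf g M) S"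
  unfolding measure_map_pmf measure_pmf_single[symmetric]
  by (rule measure_pmf.finite_measure_mono) auto

lemma set_pmf_funpow_bind_invariant:
  assumes "P x\<^sub>0" "\<And>x y. P x \<Longrightarrow> y \<in> set_pmf (step x) \<Longrightarrow> P y"
  shows "y \<in> set_pmf (((\<lambda>M. bind_pmf M step) ^^ k) (return_pmf x\<^sub>0)) \<Longrightarrow> P y"
  using assms by (induction k arbitrary: y) auto

section \<open>Exponential moments of a potential\<close>

lemma nn_integral_powr_step_le:
  fixes M :: "'a pmf" and f :: "'a \<Rightarrow> int" and c :: int
  assumes z: "1 < z"
    and up: "\<And>y. y \<in> set_pmf M \<Longrightarrow> f y \<le> c + 1"
    and down: "1 - \<delta> \<le> measure_pmf.prob M {y. f y \<le> c - 1}"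
  shows "(\<integral>\<^sup>+y. ennreal (z powr real_of_int (f y)) \<partial>M)
    \<le> ennreal (z powr real_of_int c * ((1 - \<delta>) / z + \<delta> * z))"
proof -
  let ?G = "{y. f y \<le> c - 1}"
  define q where "q = measure_pmf.prob M ?G"
  define c\<^sub>1 where "c\<^sub>1 = z powr (real_of_int c - 1)"
  define c\<^sub>2 where "c\<^sub>2 = z powr (real_of_int c + 1)"
  have c12: "0 < c\<^sub>1" "c\<^sub>1 \<le> c\<^sub>2" unfolding c\<^sub>1_def c\<^sub>2_def using z by auto
  have "AE y in M. ennreal (z powr real_of_int (f y))
      \<le> ennreal c\<^sub>1 * indicator ?G y + ennreal c\<^sub>2 * indicator (- ?G) y"
    unfolding AE_measure_pmf_iff
  proof safe
    fix y assume "y \<in> set_pmf M"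
    then have "z powr real_of_int (f y) \<le> (if y \<in> ?G then c\<^sub>1 else c\<^sub>2)"
      using up[of y] z unfolding c\<^sub>1_def c\<^sub>2_def by (auto intro!: powr_mono)
    then show "ennreal (z powr real_of_int (f y))
        \<le> ennreal c\<^sub>1 * indicator ?G y + ennreal c\<^sub>2 * indicator (- ?G) y"
      by (auto intro: ennreal_leI split: split_indicator if_splits)
  qed
  then have "(\<integral>\<^sup>+y. ennreal (z powr real_of_int (f y)) \<partial>M)
      \<le> (\<integral>\<^sup>+y. ennreal c\<^sub>1 * indicator ?G y + ennreal c\<^sub>2 * indicator (- ?G) y \<partial>M)"
    by (rule nn_integral_mono_AE)
  also have "\<dots> = ennreal c\<^sub>1 * emeasure M ?G + ennreal c\<^sub>2 * emeasure M (- ?G)"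
    by (simp add: nn_integral_add nn_integral_cmult_indicator)
  also have "\<dots> = ennreal (c\<^sub>1 * q + c\<^sub>2 * (1 - q))"
    using c12 measure_pmf.prob_compl[of ?G M]
    by (simp add: q_def measure_pmf.emeasure_eq_measure Compl_eq_Diff_UNIV ennreal_mult
        ennreal_plus)
  also have "c\<^sub>1 * q + c\<^sub>2 * (1 - q) \<le> c\<^sub>1 * (1 - \<delta>) + c\<^sub>2 * \<delta>"
    using mult_left_mono[of "1 - \<delta>" q "c\<^sub>2 - c\<^sub>1"] down c12 by (simp add: q_def algebra_simps)
  also have "\<dots> = z powr real_of_int c * ((1 - \<delta>) / z + \<delta> * z)"
    unfolding c\<^sub>1_def c\<^sub>2_def using z by (simp add: powr_diff powr_add algebra_simps)
  finally show ?thesis by (simp add: ennreal_leI)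
qed

lemma nn_integral_powr_funpow_bind_le:
  fixes step :: "'a \<Rightarrow> 'a pmf" and f :: "'a \<Rightarrow> int"
  assumes z: "1 < z" and \<delta>: "0 \<le> \<delta>" "\<delta> \<le> 1" and "P x\<^sub>0"
    and step: "\<And>x y. P x \<Longrightarrow> y \<in> set_pmf (step x) \<Longrightarrow> P y \<and> f y \<le> f x + 1"
    and down: "\<And>x. P x \<Longrightarrow> 1 - \<delta> \<le> measure_pmf.prob (step x) {y. f y \<le> f x - 1}"
  shows "(\<integral>\<^sup>+y. ennreal (z powr real_of_int (f y)) \<partial>((\<lambda>M. bind_pmf M step) ^^ k) (return_pmf x\<^sub>0))
    \<le> ennreal (z powr real_of_int (f x\<^sub>0) * ((1 - \<delta>) / z + \<delta> * z) ^ k)"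
proof (induction k)
  case (Suc k)
  define \<rho> where "\<rho> = (1 - \<delta>) / z + \<delta> * z"
  have "0 \<le> \<rho>" unfolding \<rho>_def using z \<delta> by auto
  let ?M = "((\<lambda>M. bind_pmf M step) ^^ k) (return_pmf x\<^sub>0)"
  have "(\<integral>\<^sup>+y. ennreal (z powr real_of_int (f y)) \<partial>bind_pmf ?M step)
      = (\<integral>\<^sup>+x. (\<integral>\<^sup>+y. ennreal (z powr real_of_int (f y)) \<partial>step x) \<partial>?M)"
    by simp
  also have "\<dots> \<le> (\<integral>\<^sup>+x. ennreal (z powr real_of_int (f x)) * ennreal \<rho> \<partial>?M)"
  proof (rule nn_integral_mono_AE, unfold AE_measure_pmf_iff, intro ballI)
    fix x assume "x \<in> set_pmf ?M"
    then have "P x" using set_pmf_funpow_bind_invariant[of P x\<^sub>0 step] \<open>P x\<^sub>0\<close> step by blast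
    then show "(\<integral>\<^sup>+y. ennreal (z powr real_of_int (f y)) \<partial>step x)
        \<le> ennreal (z powr real_of_int (f x)) * ennreal \<rho>"
      using nn_integral_powr_step_le[OF z, of "step x" f "f x" \<delta>] step down \<open>0 \<le> \<rho>\<close>
      by (simp add: \<rho>_def ennreal_mult)
  qed
  also have "\<dots> = (\<integral>\<^sup>+x. ennreal (z powr real_of_int (f x)) \<partial>?M) * ennreal \<rho>"
    by (rule nn_integral_multc) simp
  also have "\<dots> \<le> ennreal (z powr real_of_int (f x\<^sub>0) * \<rho> ^ k) * ennreal \<rho>"
    using Suc.IH unfolding \<rho>_def by (rule mult_right_mono) simp
  also have "\<dots> = ennreal (z powr real_of_int (f x\<^sub>0) * \<rho> ^ Suc k)"
    using \<open>0 \<le> \<rho>\<close> z by (simp add: ennreal_mult[symmetric] algebra_simps)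
  finally show ?case unfolding \<rho>_def by simp
qed simp

lemma prob_potential_ge_funpow_bind_le:
  fixes step :: "'a \<Rightarrow> 'a pmf" and f :: "'a \<Rightarrow> int"
  assumes z: "1 < z" and \<delta>: "0 \<le> \<delta>" "\<delta> \<le> 1" and "P x\<^sub>0"
    and step: "\<And>x y. P x \<Longrightarrow> y \<in> set_pmf (step x) \<Longrightarrow> P y \<and> f y \<le> f x + 1"
    and down: "\<And>x. P x \<Longrightarrow> 1 - \<delta> \<le> measure_pmf.prob (step x) {y. f y \<le> f x - 1}"
  shows "measure_pmf.prob (((\<lambda>M. bind_pmf M step) ^^ k) (return_pmf x\<^sub>0)) {y. t \<le> f y}
    \<le> z powr (real_of_int (f x\<^sub>0 - t)) * ((1 - \<delta>) / z + \<delta> * z) ^ k"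
proof -
  let ?M = "((\<lambda>M. bind_pmf M step) ^^ k) (return_pmf x\<^sub>0)" and ?A = "{y. t \<le> f y}"
  define \<rho> where "\<rho> = (1 - \<delta>) / z + \<delta> * z"
  have "ennreal (z powr real_of_int t * measure_pmf.prob ?M ?A)
      = (\<integral>\<^sup>+y. ennreal (z powr real_of_int t) * indicator ?A y \<partial>?M)"
    using z by (simp add: nn_integral_cmult_indicator measure_pmf.emeasure_eq_measure ennreal_mult)
  also have "\<dots> \<le> (\<integral>\<^sup>+y. ennreal (z powr real_of_int (f y)) \<partial>?M)"
    using z by (intro nn_integral_mono) (auto intro: ennreal_leI powr_mono split: split_indicator)
  also have "\<dots> \<le> ennreal (z powr real_of_int (f x\<^sub>0) * \<rho> ^ k)"
    unfolding \<rho>_def by (rule nn_integral_powr_funpow_bind_le[OF assms])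
  finally have "z powr real_of_int t * measure_pmf.prob ?M ?A \<le> z powr real_of_int (f x\<^sub>0) * \<rho> ^ k"
    using z \<delta> by (subst (asm) ennreal_le_iff) (auto simp: \<rho>_def)
  then show ?thesis
    using z by (simp add: \<rho>_def powr_diff field_simps)
qed

text \<open>The choice \<open>z\<^sup>2 = a (1 - \<delta>) / (\<delta> (1 - a))\<close> minimises the Chernoff bound and turns it into
  the relative entropy.\<close>
lemma chernoff_exponent_bound:
  fixes a \<delta> r :: real and s :: nat
  assumes \<delta>: "0 < \<delta>" "\<delta> < a" and a: "a < 1" and r: "r \<le> real s * (1 - 2 * a)"
  shows "\<exists>z>1. z powr r * ((1 - \<delta>) / z + \<delta> * z) ^ s \<le> exp (- real s * D_e a \<delta>)"
proof -
  define u where "u = a * (1 - \<delta>) / (\<delta> * (1 - a))"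
  define z where "z = sqrt u"
  define C where "C = (1 - \<delta>) / (1 - a)"
  have "\<delta> * (1 - a) < a * (1 - \<delta>)" using \<delta> by (simp add: algebra_simps)
  then have "1 < u" unfolding u_def using \<delta> a by (simp add: field_simps)
  then have z: "1 < z" "z * z = u" unfolding z_def by simp_all
  have "0 < C" unfolding C_def using \<delta> a by simp
  have \<rho>: "(1 - \<delta>) / z + \<delta> * z = C / z"
  proof -
    have "(1 - \<delta>) / z + \<delta> * z = ((1 - \<delta>) + \<delta> * (z * z)) / z" using z by (simp add: field_simps)
    also have "(1 - \<delta>) + \<delta> * (z * z) = C"
      unfolding z u_def C_def using \<delta> a by (simp add: field_simps)
    finally show ?thesis .
  qed
  have ln_z: "2 * ln z = ln u" unfolding z_def using \<open>1 < u\<close> by (simp add: ln_sqrt)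
  have ln_u: "ln u = ln a + ln (1 - \<delta>) - ln \<delta> - ln (1 - a)"
    unfolding u_def using \<delta> a by (simp add: ln_div ln_mult)
  have ln_C: "ln C = ln (1 - \<delta>) - ln (1 - a)" unfolding C_def using \<delta> a by (simp add: ln_div)
  have D_e_eq: "D_e a \<delta> = a * (ln a - ln \<delta>) + (1 - a) * (ln (1 - a) - ln (1 - \<delta>))"
    unfolding D_e_def using \<delta> a by (simp add: ln_div)
  have D: "- real s * D_e a \<delta> = (- 2 * a * real s) * ln z + real s * ln C"
  proof -
    have "(- 2 * a * real s) * ln z = - a * real s * ln u" using ln_z by (simp add: algebra_simps)
    then show ?thesis unfolding D_e_eq ln_C using ln_u by (simp add: algebra_simps)
  qed
  have "ln (z powr r * (C / z) ^ s) = (r - real s) * ln z + real s * ln C"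
    using z \<open>0 < C\<close> by (simp add: ln_mult ln_powr ln_realpow ln_div algebra_simps)
  also have "\<dots> \<le> (- 2 * a * real s) * ln z + real s * ln C"
    using r z by (intro add_right_mono mult_right_mono) (auto simp: algebra_simps)
  finally have "ln (z powr r * (C / z) ^ s) \<le> - real s * D_e a \<delta>"
    unfolding D .
  moreover have "0 < z powr r * (C / z) ^ s" using z \<open>0 < C\<close> by simp
  ultimately have "z powr r * (C / z) ^ s \<le> exp (- real s * D_e a \<delta>)"
    by (metis exp_le_cancel_iff exp_ln)
  then show ?thesis using z \<rho> by auto
qed

section \<open>Majority votes\<close>

lemma maj_err_eq_prob:
  assumes "0 \<le> p" "p \<le> 1"
  shows "maj_err p b = measure_pmf.prob (binomial_pmf b p) {c. nat \<lceil>real b / 2\<rceil> \<le> c}"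
proof -
  let ?h = "nat \<lceil>real b / 2\<rceil>" and ?B = "binomial_pmf b p"
  have "set_pmf ?B \<subseteq> {..b}"
    using assms by (subst set_pmf_binomial_eq) auto
  then have "{c. ?h \<le> c} \<inter> set_pmf ?B = {?h..b} \<inter> set_pmf ?B" by auto
  then have "measure_pmf.prob ?B {c. ?h \<le> c} = measure_pmf.prob ?B {?h..b}"
    by (metis measure_Int_set_pmf)
  also have "\<dots> = maj_err p b"
    using assms by (simp add: measure_measure_pmf_finite maj_err_def)
  finally show ?thesis by simp
qed

lemma maj_err_nonneg: "0 \<le> p \<Longrightarrow> p \<le> 1 \<Longrightarrow> 0 \<le> maj_err p b"
  by (simp add: maj_err_eq_prob)

lemma maj_err_le_1: "0 \<le> p \<Longrightarrow> p \<le> 1 \<Longrightarrow> maj_err p b \<le> 1"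
  by (simp add: maj_err_eq_prob)

text \<open>Flipping every response maps \<open>Bin(b, 1 - p)\<close> to \<open>Bin(b, p)\<close>, and \<open>c < \<lceil>b/2\<rceil>\<close> to
  \<open>b - c \<ge> \<lceil>b/2\<rceil>\<close>.\<close>
lemma prob_binomial_minority_le_maj_err:
  assumes "0 \<le> p" "p \<le> 1"
  shows "measure_pmf.prob (binomial_pmf b (1 - p)) {c. c < nat \<lceil>real b / 2\<rceil>} \<le> maj_err p b"
proof -
  let ?h = "nat \<lceil>real b / 2\<rceil>"
  let ?t = "\<lambda>k. real (b choose k) * p ^ k * (1 - p) ^ (b - k)"
  have hb: "?h \<le> b" "2 * ?h \<le> b + 1" by linarith+
  have inj: "inj_on (\<lambda>c. b - c) {..<?h}"
  proof (rule inj_onI)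
    fix x y assume "x \<in> {..<?h}" "y \<in> {..<?h}" "b - x = b - y"
    then show "x = y" using hb(1) by (simp only: lessThan_iff)
  qed
  have "{c. c < ?h} = {..<?h}" by auto
  then have "measure_pmf.prob (binomial_pmf b (1 - p)) {c. c < ?h}
      = (\<Sum>c<?h. real (b choose c) * (1 - p) ^ c * p ^ (b - c))"
    using assms by (simp add: measure_measure_pmf_finite)
  also have "\<dots> = (\<Sum>c<?h. ?t (b - c))"
  proof (rule sum.cong)
    fix c assume "c \<in> {..<?h}"
    then have "c \<le> b" using hb(1) by (simp only: lessThan_iff)
    then show "real (b choose c) * (1 - p) ^ c * p ^ (b - c) = ?t (b - c)"
      by (simp add: binomial_symmetric[symmetric])
  qed simp
  also have "\<dots> = (\<Sum>k\<in>(\<lambda>c. b - c) ` {..<?h}. ?t k)"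
    using inj by (simp add: sum.reindex)
  also have "\<dots> \<le> (\<Sum>k\<in>{?h..b}. ?t k)"
  proof (rule sum_mono2)
    show "(\<lambda>c. b - c) ` {..<?h} \<subseteq> {?h..b}"
    proof
      fix k assume "k \<in> (\<lambda>c. b - c) ` {..<?h}"
      then obtain c where "c < ?h" "k = b - c" by auto
      moreover from this have "?h \<le> b - c" using hb(2) by linarith
      ultimately show "k \<in> {?h..b}" unfolding atLeastAtMost_iff by linarith
    qed
    show "0 \<le> ?t k" for k using assms by simp
  qed simp
  also have "\<dots> = maj_err p b" unfolding maj_err_def by simp
  finally show ?thesis .
qed

definition majority_vote :: "real \<Rightarrow> nat \<Rightarrow> (nat \<Rightarrow> bool) \<Rightarrow> nat \<Rightarrow> bool pmf" where
  "majority_vote p b truth k = map_pmf (\<lambda>c. nat \<lceil>real b / 2\<rceil> \<le> c) (ones_count p b truth k)"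

lemma majority_vote_correct:
  assumes "0 \<le> p" "p \<le> 1"
  shows "1 - maj_err p b \<le> pmf (majority_vote p b truth k) (truth k)"
proof -
  let ?h = "nat \<lceil>real b / 2\<rceil>"
  have vote: "pmf (majority_vote p b truth k) v
      = measure_pmf.prob (ones_count p b truth k) {c. (?h \<le> c) = v}"
    for v by (simp only: majority_vote_def pmf_map vimage_def singleton_iff)
  have compl: "measure_pmf.prob M {c. ?h \<le> c} = 1 - measure_pmf.prob M {c. c < ?h}" for M
    using measure_pmf.prob_compl[of "{c. c < ?h}" M]
    by (simp add: Compl_eq_Diff_UNIV[symmetric] Compl_eq not_less)
  show ?thesis
  proof (cases "truth k")
    case True
    then show ?thesis
      using prob_binomial_minority_le_maj_err[OF assms, of b]
      by (simp only: vote ones_count_def if_True eq_True compl)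
  next
    case False
    then show ?thesis
      using compl[of "binomial_pmf b p"]
      by (simp only: vote ones_count_def if_False eq_False not_le maj_err_eq_prob[OF assms])
  qed
qed

lemma maj_err_le_exp:
  assumes "0 \<le> p" "p < 1/2" "0 < b"
  shows "maj_err p b \<le> exp (- 2 * real b * (1/2 - p)\<^sup>2)"
proof -
  have "maj_err p b = measure_pmf.prob (binomial_pmf b p) {c. nat \<lceil>real b / 2\<rceil> \<le> c}"
    using assms by (intro maj_err_eq_prob) auto
  also have "\<dots> \<le> measure_pmf.prob (binomial_pmf b p) {c. p + (1/2 - p) \<le> real c / real b}"
  proof (rule measure_pmf.finite_measure_mono)
    show "{c. nat \<lceil>real b / 2\<rceil> \<le> c} \<subseteq> {c. p + (1/2 - p) \<le> real c / real b}"
    proof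
      fix c assume "c \<in> {c. nat \<lceil>real b / 2\<rceil> \<le> c}"
      then have "real b / 2 \<le> real c" by simp
      then show "c \<in> {c. p + (1/2 - p) \<le> real c / real b}" using assms(3) by (simp add: field_simps)
    qed
  qed simp
  also have "\<dots> \<le> exp (- 2 * real b * (1/2 - p)\<^sup>2)"
    using binomial_distribution.prob_ge'[of p b "1/2 - p"] assms
    by (simp add: binomial_distribution_def)
  finally show ?thesis .
qed

lemma one_minus_cube_le:
  fixes e :: real
  assumes "e \<le> 3"
  shows "1 - (1 - e) ^ 3 \<le> 3 * e"
proof -
  have "3 * e - (1 - (1 - e) ^ 3) = e\<^sup>2 * (3 - e)"
    by (simp add: power2_eq_square power3_eq_cube algebra_simps)
  moreover have "0 \<le> e\<^sup>2 * (3 - e)" using assms by simp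
  ultimately show ?thesis by linarith
qed

lemma beta_pd_spec:
  assumes "0 \<le> p" "p < 1/2" "0 < \<delta>"
  shows "0 < beta_pd p \<delta>" "1 - (1 - maj_err p (beta_pd p \<delta>)) ^ 3 \<le> \<delta>"
proof -
  define \<epsilon> where "\<epsilon> = 1/2 - p"
  have "0 < \<epsilon>" using assms unfolding \<epsilon>_def by simp
  obtain b :: nat where b: "max 1 (ln (3 / \<delta>) / (2 * \<epsilon>\<^sup>2)) < real b"
    using reals_Archimedean2 by blast
  then have "0 < b" by simp
  have "ln (3 / \<delta>) < real b * (2 * \<epsilon>\<^sup>2)"
    using b \<open>0 < \<epsilon>\<close> by (simp add: divide_less_eq)
  then have "3 / \<delta> < exp (real b * (2 * \<epsilon>\<^sup>2))"
    using assms(3) by (metis exp_less_mono exp_ln divide_pos_pos zero_less_numeral)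
  then have "exp (- 2 * real b * \<epsilon>\<^sup>2) < \<delta> / 3"
    using assms(3) by (simp add: exp_minus field_simps mult_ac)
  then have e: "maj_err p b < \<delta> / 3"
    using maj_err_le_exp[OF assms(1,2) \<open>0 < b\<close>] unfolding \<epsilon>_def by linarith
  have "maj_err p b \<le> 3" using maj_err_le_1[of p b] assms by simp
  then have "1 - (1 - maj_err p b) ^ 3 \<le> 3 * maj_err p b"
    using one_minus_cube_le[of "maj_err p b"] by simp
  then have "\<exists>b. 0 < b \<and> 1 - (1 - maj_err p b) ^ 3 \<le> \<delta>"
    using e \<open>0 < b\<close> by (intro exI[of _ b]) auto
  then show "0 < beta_pd p \<delta>" "1 - (1 - maj_err p (beta_pd p \<delta>)) ^ 3 \<le> \<delta>"
    unfolding beta_pd_def by (metis (mono_tags, lifting) LeastI_ex)+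
qed

section \<open>One step of the search\<close>

lemma nat_ceiling_midpoint: "nat \<lceil>(real i + real j) / 2\<rceil> = (i + j + 1) div 2"
proof -
  have "i + j = 2 * ((i + j) div 2) \<or> i + j = 2 * ((i + j) div 2) + 1" by presburger
  then have "\<lceil>(real i + real j) / 2\<rceil> = int ((i + j + 1) div 2)"
    by (intro ceiling_unique) (auto simp flip: of_nat_add)
  then show ?thesis by simp
qed

definition tree_parent :: "'a list \<Rightarrow> 'a list" where
  "tree_parent xs = (if length xs \<le> 1 then xs else tl xs)"

definition low_check :: "real \<Rightarrow> nat \<Rightarrow> (nat \<Rightarrow> bool) \<Rightarrow> nat \<Rightarrow> bool pmf" where
  "low_check p b truth i = (if i \<noteq> 0 then majority_vote p b truth i else return_pmf True)"

definition high_check :: "real \<Rightarrow> nat \<Rightarrow> nat \<Rightarrow> (nat \<Rightarrow> bool) \<Rightarrow> nat \<Rightarrow> bool pmf" where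
  "high_check p b n truth j =
     (if j \<noteq> n then map_pmf Not (majority_vote p b truth j) else return_pmf True)"

definition descend :: "real \<Rightarrow> nat \<Rightarrow> (nat \<Rightarrow> bool) \<Rightarrow> nat \<Rightarrow> nat \<Rightarrow> (nat \<times> nat) list
    \<Rightarrow> (nat \<times> nat) list pmf" where
  "descend p b truth i j pth =
     (if 2 \<le> j - i
      then map_pmf
             (\<lambda>right. (if right then ((i + j + 1) div 2, j) else (i, (i + j + 1) div 2)) # pth)
             (majority_vote p b truth ((i + j + 1) div 2))
      else return_pmf ((i, j) # pth))"

lemma nst_step_eq:
  assumes "hd pth = (i, j)"
  shows "nst_step p b n truth pth =
    low_check p b truth i \<bind> (\<lambda>low_ok.
      if \<not> low_ok then return_pmf (tree_parent pth)
      else high_check p b n truth j \<bind> (\<lambda>high_ok.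
        if \<not> high_ok then return_pmf (tree_parent pth) else descend p b truth i j pth))"
proof -
  define h where "h = nat \<lceil>real b / 2\<rceil>"
  have vote: "majority_vote p b truth k = map_pmf (\<lambda>c. h \<le> c) (ones_count p b truth k)" for k
    unfolding majority_vote_def h_def ..
  have high: "map_pmf (\<lambda>c. c < h) M = map_pmf Not (map_pmf (\<lambda>c. h \<le> c) M)" for M :: "nat pmf"
    by (simp add: pmf.map_comp o_def not_le)
  have mid: "M \<bind> (\<lambda>c. return_pmf (if c < h then A # t else B # t))
      = map_pmf (\<lambda>right. (if right then B else A) # t) (map_pmf (\<lambda>c. h \<le> c) M)"
    for M :: "nat pmf" and A B :: "nat \<times> nat" and t
    unfolding map_pmf_def bind_assoc_pmf bind_return_pmf by (intro bind_pmf_cong) auto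
  show ?thesis
    unfolding nst_step_def Let_def assms fst_conv snd_conv nat_ceiling_midpoint
      tree_parent_def[symmetric] h_def[symmetric] low_check_def high_check_def descend_def
      vote high mid
    ..
qed

lemma measure_nst_step:
  fixes p :: real and b n :: nat and truth :: "nat \<Rightarrow> bool"
  assumes hd: "hd pth = (i, j)"
  defines "a \<equiv> pmf (low_check p b truth i) True" and "c \<equiv> pmf (high_check p b n truth j) True"
  shows "measure_pmf.prob (nst_step p b n truth pth) S
    = a * (c * measure_pmf.prob (descend p b truth i j pth) S
           + (1 - c) * indicator S (tree_parent pth))
      + (1 - a) * indicator S (tree_parent pth)"
  unfolding a_def c_def nst_step_eq[OF hd] by (simp add: measure_bind_pmf_bool)

lemma set_pmf_descend:
  "y \<in> set_pmf (descend p b truth i j pth) \<Longrightarrow> \<exists>v. tree_child (i, j) v \<and> y = v # pth"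
  by (auto simp: descend_def tree_child_def split: if_splits)

lemma nst_step_tree_path:
  assumes "tree_path n pth" "y \<in> set_pmf (nst_step p b n truth pth)"
  shows "tree_path n y \<and> potential l y \<le> potential l pth + 1"
proof -
  obtain i j r where pth: "pth = (i, j) # r" using assms(1) by (cases pth) auto
  then have hd: "hd pth = (i, j)" by simp
  from assms(2) consider "y = tree_parent pth" | "y \<in> set_pmf (descend p b truth i j pth)"
    unfolding nst_step_eq[OF hd] by (auto simp: set_bind_pmf split: if_splits)
  then show ?thesis
  proof cases
    case 1
    then show ?thesis using assms(1) pth by (cases r) (auto simp: tree_parent_def)
  next
    case 2
    then obtain v where "tree_child (i, j) v" "y = v # pth" by (blast dest: set_pmf_descend)
    then show ?thesis using assms(1) pth by auto
  qed
qed

section \<open>Success probability\<close>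

lemma le_two_power_ceiling_log: "1 \<le> n \<Longrightarrow> n \<le> 2 ^ nat \<lceil>log 2 (real n)\<rceil>"
proof -
  assume "1 \<le> n"
  then have "real n = 2 powr log 2 (real n)" by simp
  also have "\<dots> \<le> 2 powr real (nat \<lceil>log 2 (real n)\<rceil>)"
    using \<open>1 \<le> n\<close> by (intro powr_mono) auto
  finally show ?thesis by (simp add: powr_realpow)
qed

locale noisy_search =
  fixes p :: real and b n l :: nat and truth :: "nat \<Rightarrow> bool"
  assumes p_range: "0 \<le> p" "p \<le> 1"
    and l_range: "1 \<le> l" "l \<le> n"
    and truth_iff: "\<And>k. 1 \<le> k \<Longrightarrow> k < n \<Longrightarrow> truth k \<longleftrightarrow> k < l"
begin

lemma vote_correct: "1 \<le> k \<Longrightarrow> k < n \<Longrightarrow> 1 - maj_err p b \<le> pmf (majority_vote p b truth k) (k < l)"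
  using majority_vote_correct[OF p_range, of b truth k] truth_iff by simp

lemma vote_wrong: "1 \<le> k \<Longrightarrow> k < n \<Longrightarrow> pmf (majority_vote p b truth k) (l \<le> k) \<le> maj_err p b"
  using vote_correct[of k] pmf_Not[of "majority_vote p b truth k" "k < l"] by (simp add: not_less)

lemma low_check_pass: "i < l \<Longrightarrow> i < n \<Longrightarrow> 1 - maj_err p b \<le> pmf (low_check p b truth i) True"
  using vote_correct[of i] maj_err_nonneg[OF p_range] by (auto simp: low_check_def)

lemma low_check_fail: "l \<le> i \<Longrightarrow> i < n \<Longrightarrow> pmf (low_check p b truth i) True \<le> maj_err p b"
  using vote_wrong[of i] l_range by (auto simp: low_check_def)

lemma high_check_pass: "l \<le> j \<Longrightarrow> j \<le> n \<Longrightarrow> 1 - maj_err p b \<le> pmf (high_check p b n truth j) True"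
  using vote_correct[of j] maj_err_nonneg[OF p_range] l_range
  by (auto simp: high_check_def pmf_map_Not_True)

lemma high_check_fail: "1 \<le> j \<Longrightarrow> j < l \<Longrightarrow> pmf (high_check p b n truth j) True \<le> maj_err p b"
  using vote_wrong[of j] l_range by (auto simp: high_check_def pmf_map_Not_True)

lemma descend_covers:
  assumes "covers l (i, j)" "j \<le> n"
  shows "1 - maj_err p b \<le> measure_pmf.prob (descend p b truth i j pth) {v # pth |v. covers l v}"
proof (cases "2 \<le> j - i")
  case True
  define mid where "mid = (i + j + 1) div 2"
  have mid: "i < mid" "mid < j" using True unfolding mid_def by auto
  have "1 - maj_err p b \<le> pmf (majority_vote p b truth mid) (mid < l)"
    using mid assms by (intro vote_correct) (auto simp: covers_def)
  also have "\<dots> \<le> measure_pmf.prob (descend p b truth i j pth) {v # pth |v. covers l v}"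
    unfolding descend_def if_P[OF True] mid_def[symmetric] using mid assms(1)
    by (intro pmf_le_measure_map_pmf) (auto simp: covers_def)
  finally show ?thesis .
next
  case False
  then show ?thesis using assms maj_err_nonneg[OF p_range] by (auto simp: descend_def)
qed

lemma step_potential_decrease_covers:
  assumes path: "tree_path n pth" and hd: "hd pth = (i, j)" and covers: "covers l (i, j)"
  shows "(1 - maj_err p b) ^ 3
    \<le> measure_pmf.prob (nst_step p b n truth pth) {y. potential l y \<le> potential l pth - 1}"
proof -
  let ?e = "maj_err p b" and ?S = "{y. potential l y \<le> potential l pth - 1}"
  let ?a = "pmf (low_check p b truth i) True" and ?c = "pmf (high_check p b n truth j) True"
    and ?d = "measure_pmf.prob (descend p b truth i j pth) ?S"
  obtain r where pth: "pth = (i, j) # r" using path hd by (cases pth) auto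
  then have "j \<le> n" using tree_path_bounds[OF path, of "(i, j)"] l_range by auto
  have "tree_parent pth \<notin> ?S" using pth covers by (cases r) (auto simp: tree_parent_def)
  have "1 - ?e \<le> ?a" "1 - ?e \<le> ?c"
    using covers \<open>j \<le> n\<close> unfolding covers_def by (auto intro: low_check_pass high_check_pass)
  moreover have "1 - ?e \<le> ?d"
    using descend_covers[OF covers \<open>j \<le> n\<close>, of pth]
    by (rule order_trans) (auto intro: measure_pmf.finite_measure_mono)
  moreover have "0 \<le> 1 - ?e" using maj_err_le_1[OF p_range] by simp
  ultimately have "(1 - ?e) * (1 - ?e) * (1 - ?e) \<le> ?a * ?c * ?d"
    by (intro mult_mono) auto
  then show ?thesis
    using measure_nst_step[OF hd, of p b n truth ?S] \<open>tree_parent pth \<notin> ?S\<close>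
    by (simp add: power3_eq_cube)
qed

lemma step_potential_decrease_not_covers:
  assumes path: "tree_path n pth" and hd: "hd pth = (i, j)" and not_covers: "\<not> covers l (i, j)"
  shows "1 - maj_err p b
    \<le> measure_pmf.prob (nst_step p b n truth pth) {y. potential l y \<le> potential l pth - 1}"
proof -
  let ?e = "maj_err p b" and ?S = "{y. potential l y \<le> potential l pth - 1}"
  let ?a = "pmf (low_check p b truth i) True" and ?c = "pmf (high_check p b n truth j) True"
    and ?d = "measure_pmf.prob (descend p b truth i j pth) ?S"
  obtain r where pth: "pth = (i, j) # r" using path hd by (cases pth) auto
  then have "i < j" "j \<le> n" using tree_path_bounds[OF path, of "(i, j)"] l_range by auto
  obtain w r' where "r = w # r'"
    using path pth not_covers l_range by (cases r) (auto simp: covers_def)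
  then have "tree_parent pth \<in> ?S" using pth not_covers by (simp add: tree_parent_def)
  have "?a * ?c \<le> ?e"
  proof (cases "l \<le> i")
    case True
    then have "?a \<le> ?e" using \<open>i < j\<close> \<open>j \<le> n\<close> by (intro low_check_fail) auto
    then show ?thesis
      using mult_mono[of ?a ?e ?c 1] pmf_le_1[of "high_check p b n truth j"]
        maj_err_nonneg[OF p_range]
      by simp
  next
    case False
    then have "?c \<le> ?e"
      using not_covers \<open>i < j\<close> unfolding covers_def by (intro high_check_fail) auto
    then show ?thesis using mult_mono[of ?a 1 ?c ?e] pmf_le_1[of "low_check p b truth i"] by simp
  qed
  moreover have "measure_pmf.prob (nst_step p b n truth pth) ?S
      = ?a * (?c * ?d + (1 - ?c)) + (1 - ?a)"
    using measure_nst_step[OF hd, of p b n truth ?S] \<open>tree_parent pth \<in> ?S\<close> by simp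
  moreover have "?a * (?c * ?d + (1 - ?c)) + (1 - ?a) = ?a * (?c * ?d) + (1 - ?a * ?c)"
    by (simp add: algebra_simps)
  moreover have "0 \<le> ?a * (?c * ?d)" by simp
  ultimately show ?thesis by linarith
qed

lemma step_potential_decrease:
  assumes "tree_path n pth"
  shows "(1 - maj_err p b) ^ 3
    \<le> measure_pmf.prob (nst_step p b n truth pth) {y. potential l y \<le> potential l pth - 1}"
proof -
  obtain i j r where pth: "pth = (i, j) # r" using assms by (cases pth) auto
  have "(1 - maj_err p b) ^ 3 \<le> 1 - maj_err p b"
    using maj_err_nonneg[OF p_range] maj_err_le_1[OF p_range]
      power_decreasing[of 1 3 "1 - maj_err p b"] by simp
  then show ?thesis
    using step_potential_decrease_covers[OF assms] step_potential_decrease_not_covers[OF assms] pth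
    by (cases "covers l (i, j)") fastforce+
qed

lemma prob_output_correct_ge:
  assumes z: "1 < z" and \<delta>: "0 \<le> \<delta>" "\<delta> \<le> 1" and err: "1 - \<delta> \<le> (1 - maj_err p b) ^ 3"
    and K: "n \<le> 2 ^ K"
  shows "1 - z powr (real K - 1) * ((1 - \<delta>) / z + \<delta> * z) ^ s
    \<le> measure_pmf.prob (nst_output p b n s truth) {l}"
proof -
  let ?M = "((\<lambda>M. bind_pmf M (nst_step p b n truth)) ^^ s) (return_pmf [(0, n)])"
  let ?A = "{y. - int K \<le> potential l y}"
  have root: "tree_path n [(0, n)]" "potential l [(0, n)] = -1"
    using l_range by (simp_all add: covers_def potential_def)
  have step: "tree_path n y \<and> potential l y \<le> potential l x + 1"
    if "tree_path n x" "y \<in> set_pmf (nst_step p b n truth x)" for x y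
    using nst_step_tree_path[OF that] .
  have down: "1 - \<delta>
      \<le> measure_pmf.prob (nst_step p b n truth x) {y. potential l y \<le> potential l x - 1}"
    if "tree_path n x" for x
    using step_potential_decrease[OF that] err by linarith
  have "measure_pmf.prob ?M ?A \<le> z powr (real K - 1) * ((1 - \<delta>) / z + \<delta> * z) ^ s"
    using prob_potential_ge_funpow_bind_le[OF z \<delta> root(1) step down, of s "- int K"]
    unfolding root(2) by simp
  moreover have "measure_pmf.prob ?M (- ?A) \<le> measure_pmf.prob (nst_output p b n s truth) {l}"
  proof -
    have "- ?A \<inter> set_pmf ?M \<subseteq> (\<lambda>pth. fst (hd pth) + 1) -` {l}"
    proof
      fix y assume y: "y \<in> - ?A \<inter> set_pmf ?M"
      then have "tree_path n y"
        using set_pmf_funpow_bind_invariant[of "tree_path n"] root(1) step by blast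
      then show "y \<in> (\<lambda>pth. fst (hd pth) + 1) -` {l}"
        using tree_path_output_eq[OF _ _ K] y l_range by force
    qed
    then have "measure_pmf.prob ?M (- ?A \<inter> set_pmf ?M)
        \<le> measure_pmf.prob ?M ((\<lambda>pth. fst (hd pth) + 1) -` {l})"
      by (rule measure_pmf.finite_measure_mono) simp
    then show ?thesis by (simp add: measure_Int_set_pmf nst_output_def measure_map_pmf)
  qed
  moreover have "measure_pmf.prob ?M (- ?A) = 1 - measure_pmf.prob ?M ?A"
    using measure_pmf.prob_compl[of ?A ?M] by (simp add: Compl_eq_Diff_UNIV)
  ultimately show ?thesis by linarith
qed

lemma prob_output_correct_ge_exp:
  assumes \<delta>: "0 < \<delta>" "\<delta> < a" and a: "a < 1" and err: "1 - \<delta> \<le> (1 - maj_err p b) ^ 3"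
    and s: "log 2 (real n) \<le> real s * (1 - 2 * a)"
  shows "1 - exp (- real s * D_e a \<delta>) \<le> measure_pmf.prob (nst_output p b n s truth) {l}"
proof -
  define K where "K = nat \<lceil>log 2 (real n)\<rceil>"
  have "0 \<le> log 2 (real n)" using l_range by simp
  then have "real K - 1 \<le> real s * (1 - 2 * a)" unfolding K_def using s by linarith
  then obtain z where
    "1 < z" "z powr (real K - 1) * ((1 - \<delta>) / z + \<delta> * z) ^ s \<le> exp (- real s * D_e a \<delta>)"
    using chernoff_exponent_bound[OF \<delta> a] by blast
  moreover have "n \<le> 2 ^ K" unfolding K_def using l_range by (intro le_two_power_ceiling_log) simp
  ultimately show ?thesis
    using prob_output_correct_ge[of z \<delta> K s] \<delta> a err by fastforce
qed

end

lemma strict_mono_on_threshold: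
  fixes theta :: "nat \<Rightarrow> real"
  assumes mono: "strict_mono_on {1..n-1} theta" and l: "l \<in> {1..n}"
    and below: "1 < l \<longrightarrow> theta (l - 1) < x" and above: "l < n \<longrightarrow> x < theta l"
    and k: "1 \<le> k" "k < n"
  shows "theta k < x \<longleftrightarrow> k < l"
proof (cases "k < l")
  case True
  then have "theta k \<le> theta (l - 1)" using k l by (intro strict_mono_on_leD[OF mono]) auto
  then show ?thesis using below True k by simp
next
  case False
  then have "theta l \<le> theta k" using k l by (intro strict_mono_on_leD[OF mono]) auto
  then show ?thesis using above False k by simp
qed

theorem lemma3:
  fixes p \<delta> :: real and n m lstar :: nat and theta :: "nat \<Rightarrow> real" and x :: real
  assumes "0 \<le> p" "p < 1/2"
    and "0 < \<delta>" "\<delta> < 1/2"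
    and "1 \<le> n"
    and "strict_mono_on {1..n-1} theta"
    and "x \<notin> theta ` {1..n-1}"
    and "lstar \<in> {1..n}"
    and "1 < lstar \<longrightarrow> theta (lstar - 1) < x"
    and "lstar < n \<longrightarrow> x < theta lstar"
    and "0 < m"
    and "1/2 - log 2 (real n) / (2 * real (nat \<lceil>real m / (3 * real (beta_pd p \<delta>))\<rceil>)) > \<delta>"
  shows "measure_pmf.prob
           (nst_output p (beta_pd p \<delta>) n (nat \<lceil>real m / (3 * real (beta_pd p \<delta>))\<rceil>)
              (\<lambda>k. theta k < x)) {lstar}
         \<ge> 1 - exp (- real (nat \<lceil>real m / (3 * real (beta_pd p \<delta>))\<rceil>) *
               D_e (1/2 - log 2 (real n) / (2 * real (nat \<lceil>real m / (3 * real (beta_pd p \<delta>))\<rceil>))) \<delta>)"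
proof -
  define \<beta> where "\<beta> = beta_pd p \<delta>"
  define s where "s = nat \<lceil>real m / (3 * real \<beta>)\<rceil>"
  define a where "a = 1/2 - log 2 (real n) / (2 * real s)"
  have \<beta>: "0 < \<beta>" "1 - (1 - maj_err p \<beta>) ^ 3 \<le> \<delta>"
    using beta_pd_spec assms(1-3) unfolding \<beta>_def by auto
  then have "0 < s" using assms(11) unfolding s_def by simp
  interpret noisy_search p \<beta> n lstar "\<lambda>k. theta k < x"
    using assms(1,2,8) strict_mono_on_threshold[OF assms(6,8,9,10)] by unfold_locales auto
  have "1 - exp (- real s * D_e a \<delta>)
      \<le> measure_pmf.prob (nst_output p \<beta> n s (\<lambda>k. theta k < x)) {lstar}"
  proof (rule prob_output_correct_ge_exp)
    show "\<delta> < a" using assms(12) unfolding a_def s_def \<beta>_def by simp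
    show "a < 1" "log 2 (real n) \<le> real s * (1 - 2 * a)"
      using \<open>0 < s\<close> assms(5) unfolding a_def by (simp_all add: field_simps add_pos_nonneg)
  qed (use assms(3) \<beta> in auto)
  then show ?thesis unfolding a_def s_def \<beta>_def by simp
qed

end
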